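(* Let $a\in\mathbb{R}$, $b\in(a,\infty)$, $f\in C^1([a,b],\mathbb{R})$, $p\in C([a,b],\mathbb{R})$ satisfy for all $x\in[a,b]$ that $f'(x)>0\le p(x)$ and $\int_a^b|p(y)|\,\mathrm{d}y>0$, assume that $f$ is strictly convex, let $g\colon[a,b]\to\mathbb{R}$ be affine linear, assume $\int_a^b(f(x)-g(x))p(x)\,\mathrm{d}x=0$, and let $\lambda=\max\{|f(x)-g(x)|\colon x\in\{a,b\},\ g(x)<f(x)\}$ (under these hypotheses this set is nonempty). Then $$\int_a^b(f(x)-g(x))^2p(x)\,\mathrm{d}x\le\lambda\Big[\lambda+\sup_{x\in[a,b]}f'(x)\Big]\Big[\sup_{x\in[a,b]}p(x)\Big](b-a).$$ *)

theory Defs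
  imports "HOL-Analysis.Analysis"
begin

definition strictly_convex_on :: "real set \<Rightarrow> (real \<Rightarrow> real) \<Rightarrow> bool" where
  "strictly_convex_on S f \<longleftrightarrow>
     (\<forall>x\<in>S. \<forall>y\<in>S. \<forall>t::real. x \<noteq> y \<and> 0 < t \<and> t < 1 \<longrightarrow>
        f ((1 - t) * x + t * y) < (1 - t) * f x + t * f y)"

end

theory Submission
  imports Defs
begin

(* Let h = f - g. It is strictly convex, and since it is orthogonal to the nonnegative weight p,
   its minimum h x0 is nonpositive, while strict convexity forces h > 0 at one of the endpoints;
   thus lam = max (h a) (h b) > 0. Orthogonality also gives  int h^2 p = int h (h - h x0) p.
   With B = max (h b) 0, on [x0, b] the function h lies below the line from (x0, h x0) to (b, B):
   the integrand is nonpositive left of the zero w of that line and at most B (B - h x0) sup p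
   right of it, and (b - w)(B - h x0) = B (b - x0); [a, x0] is symmetric. Hence
   int h^2 p <= lam^2 (sup p)(b - a), which is sharper than the claim because sup f' > 0. *)

lemma strictly_convex_on_imp_convex_on:
  fixes f :: "real \<Rightarrow> real"
  assumes "convex S" and "strictly_convex_on S f"
  shows "convex_on S f"
proof (rule convex_on_linorderI[OF _ assms(1)])
  fix t x y :: real
  assume "0 < t" "t < 1" "x \<in> S" "y \<in> S" "x < y"
  then show "f ((1 - t) *\<^sub>R x + t *\<^sub>R y) \<le> (1 - t) * f x + t * f y"
    using assms(2) unfolding strictly_convex_on_def by (simp add: less_imp_le)
qed

lemma strictly_convex_on_diff_affine:
  fixes f g :: "real \<Rightarrow> real"
  assumes "convex S" and "strictly_convex_on S f" and "\<And>x. x \<in> S \<Longrightarrow> g x = c * x + d"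
  shows "strictly_convex_on S (\<lambda>x. f x - g x)"
  unfolding strictly_convex_on_def
proof (intro ballI allI impI)
  fix x y and t :: real assume x: "x \<in> S" and y: "y \<in> S" and xyt: "x \<noteq> y \<and> 0 < t \<and> t < 1"
  have "(1 - t) * x + t * y \<in> S"
    using convexD[OF assms(1) x y, of "1 - t" t] xyt by simp
  then have "g ((1 - t) * x + t * y) = (1 - t) * g x + t * g y"
    using assms(3) x y by (simp add: algebra_simps)
  moreover have "f ((1 - t) * x + t * y) < (1 - t) * f x + t * f y"
    using assms(2) x y xyt unfolding strictly_convex_on_def by blast
  ultimately show "f ((1 - t) * x + t * y) - g ((1 - t) * x + t * y)
      < (1 - t) * (f x - g x) + t * (f y - g y)"
    by (simp add: algebra_simps)
qed

lemma strictly_convex_on_chord_less: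
  fixes f :: "real \<Rightarrow> real"
  assumes "strictly_convex_on S f" and "u \<in> S" and "v \<in> S" and "u < x" and "x < v"
  shows "f x < ((v - x) * f u + (x - u) * f v) / (v - u)"
proof -
  define t where "t = (x - u) / (v - u)"
  have "0 < t" "t < 1"
    using assms(4,5) by (auto simp: t_def field_simps)
  moreover have "(1 - t) * u + t * v = u + t * (v - u)"
    by (simp add: algebra_simps)
  then have "(1 - t) * u + t * v = x"
    using assms(4,5) by (simp add: t_def)
  moreover have "1 - t = (v - x) / (v - u)"
    using assms(4,5) by (simp add: t_def divide_simps)
  then have "(1 - t) * f u + t * f v = ((v - x) * f u + (x - u) * f v) / (v - u)"
    by (simp add: t_def add_divide_distrib)
  ultimately show ?thesis
    using assms(1-5) unfolding strictly_convex_on_def by (metis order.asym)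
qed

lemma convex_on_reflect:
  fixes f :: "real \<Rightarrow> real"
  assumes "convex_on {a..b} f"
  shows "convex_on {-b..-a} (\<lambda>x. f (- x))"
proof (rule convex_onI)
  fix t x y :: real
  assume "0 < t" "t < 1" "x \<in> {-b..-a}" "y \<in> {-b..-a}"
  then show "f (- ((1 - t) *\<^sub>R x + t *\<^sub>R y)) \<le> (1 - t) * f (- x) + t * f (- y)"
    using convex_onD[OF assms, of t "-x" "-y"] by simp
qed (rule convex_real_interval)

lemma continuous_on_Icc_le_SUP:
  fixes f :: "real \<Rightarrow> real"
  assumes "continuous_on {a..b} f" and "x \<in> {a..b}"
  shows "f x \<le> (SUP y\<in>{a..b}. f y)"
proof (rule cSUP_upper[OF assms(2)])
  show "bdd_above (f ` {a..b})"
    using assms(1) by (intro bounded_imp_bdd_above compact_imp_bounded compact_continuous_image) auto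
qed

lemma Max_pos_endpoint_values:
  fixes h :: "real \<Rightarrow> real"
  assumes "0 < h a \<or> 0 < h b"
  shows "Max {\<bar>h x\<bar> | x. x \<in> {a, b} \<and> 0 < h x} = max (h a) (h b)"
proof -
  have "{\<bar>h x\<bar> | x. x \<in> {a, b} \<and> 0 < h x}
      = (if 0 < h a then {h a} else {}) \<union> (if 0 < h b then {h b} else {})"
    by (auto; force)
  then show ?thesis
    using assms by (auto simp: max_def)
qed

lemma weighted_integral_zero_imp_min_nonpos:
  fixes h p :: "real \<Rightarrow> real"
  assumes "(\<lambda>x. h x * p x) integrable_on S" and "p integrable_on S"
    and "\<And>x. x \<in> S \<Longrightarrow> 0 \<le> p x" and "integral S p > 0"
    and "integral S (\<lambda>x. h x * p x) = 0" and "\<And>x. x \<in> S \<Longrightarrow> h x0 \<le> h x"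
  shows "h x0 \<le> 0"
proof -
  have "h x0 * integral S p = integral S (\<lambda>x. h x0 * p x)"
    by simp
  also have "\<dots> \<le> integral S (\<lambda>x. h x * p x)"
    using assms by (intro integral_le integrable_on_mult_right mult_right_mono) auto
  finally show ?thesis
    using assms(4,5) by (simp add: mult_le_0_iff)
qed

lemma integral_le_step_bound:
  fixes F :: "real \<Rightarrow> real"
  assumes "a \<le> w" and "w \<le> b" and "F integrable_on {a..b}"
    and "\<And>x. x \<in> {a..w} \<Longrightarrow> F x \<le> 0" and "\<And>x. x \<in> {w..b} \<Longrightarrow> F x \<le> C"
  shows "integral {a..b} F \<le> C * (b - w)"
proof -
  have "F integrable_on {a..w}" "F integrable_on {w..b}"
    using assms(1-3) by (auto intro: integrable_on_subinterval)
  then have "integral {a..w} F \<le> integral {a..w} (\<lambda>x. 0)"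
    and "integral {w..b} F \<le> integral {w..b} (\<lambda>x. C)"
    using assms(4,5) by (auto intro!: integral_le simp del: integral_0 integral_const_real)
  moreover have "integral {a..b} F = integral {a..w} F + integral {w..b} F"
    using Henstock_Kurzweil_Integration.integral_combine[OF assms(1-3)] by simp
  ultimately show ?thesis
    using assms(2) by (simp add: mult.commute)
qed

lemma convex_on_nonpos_before_chord_zero:
  fixes H :: "real \<Rightarrow> real"
  assumes "convex_on {x0..b} H" and "x \<in> {x0..b}" and "H x0 \<le> 0" and "H b \<le> \<beta>"
    and "(\<beta> - H x0) * (x - x0) \<le> - H x0 * (b - x0)"
  shows "H x \<le> 0"
proof (cases "x0 = b")
  case False
  then have "x0 < b"
    using assms(2) by simp
  have "H x \<le> (H b - H x0) / (b - x0) * (x - x0) + H x0"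
    using convex_onD_Icc'[OF assms(1,2)] by simp
  also have "\<dots> \<le> (\<beta> - H x0) * (x - x0) / (b - x0) + H x0"
    using assms(2,4) \<open>x0 < b\<close> by (simp add: divide_right_mono mult_right_mono)
  also have "\<dots> \<le> 0"
    using assms(5) \<open>x0 < b\<close> pos_divide_le_eq[of "b - x0" "(\<beta> - H x0) * (x - x0)" "- H x0"]
    by simp
  finally show ?thesis .
qed (use assms(2,3) in auto)

lemma convex_on_min_left_integrand_le:
  fixes H :: "real \<Rightarrow> real"
  assumes "convex_on {x0..b} H" and "x \<in> {x0..b}" and "H x0 \<le> H x" and "H x0 \<le> 0"
    and "0 \<le> q" and "q \<le> P"
  shows "H x * (H x - H x0) * q \<le> max (H b) 0 * (max (H b) 0 - H x0) * P"
proof -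
  define \<beta> where "\<beta> = max (H b) 0"
  have "H x \<le> \<beta>"
    using convex_on_le_max[OF assms(1,2)] assms(4) by (simp add: \<beta>_def)
  then have factor_le: "H x * (H x - H x0) \<le> \<beta> * (\<beta> - H x0)"
    using assms(3,4)
    by (cases "0 \<le> H x") (auto simp: \<beta>_def intro: mult_mono order.trans[OF mult_nonpos_nonneg])
  have "H x * (H x - H x0) * q \<le> \<beta> * (\<beta> - H x0) * P"
    using assms(4-6) by (intro mult_mono[OF factor_le]) (auto simp: \<beta>_def)
  then show ?thesis
    by (simp add: \<beta>_def)
qed

lemma convex_on_min_left_integral_le:
  fixes H p :: "real \<Rightarrow> real"
  assumes "x0 \<le> b" and "convex_on {x0..b} H" and "continuous_on {x0..b} H"
    and "continuous_on {x0..b} p"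
    and "\<And>x. x \<in> {x0..b} \<Longrightarrow> 0 \<le> p x" and "\<And>x. x \<in> {x0..b} \<Longrightarrow> p x \<le> P"
    and "\<And>x. x \<in> {x0..b} \<Longrightarrow> H x0 \<le> H x" and "H x0 \<le> 0"
  shows "integral {x0..b} (\<lambda>x. H x * (H x - H x0) * p x) \<le> P * (max (H b) 0)\<^sup>2 * (b - x0)"
proof -
  define \<beta> where "\<beta> = max (H b) 0"
  define m where "m = - H x0"
  define \<theta> where "\<theta> = m / (\<beta> + m)"
  define w where "w = x0 + \<theta> * (b - x0)"
    \<comment> \<open>the zero of the line through (x0, -m) and (b, \<beta>), which majorises H;
       if \<beta> = m = 0 the division yields \<theta> = 0, which is harmless\<close>
  have "0 \<le> \<beta>" "0 \<le> m"
    using assms(8) by (auto simp: \<beta>_def m_def)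
  then have "0 \<le> \<theta>" "\<theta> \<le> 1" "(\<beta> + m) * \<theta> = m"
    by (auto simp: \<theta>_def divide_le_eq)
  then have w_between: "x0 \<le> w" "w \<le> b"
    using assms(1) mult_left_le_one_le[of "b - x0" \<theta>] by (auto simp: w_def)
  define F where "F x = H x * (H x - H x0) * p x" for x
  have "F integrable_on {x0..b}"
    unfolding F_def using assms(3,4) by (intro integrable_continuous_interval continuous_intros)
  moreover have "F x \<le> 0" if "x \<in> {x0..w}" for x
  proof -
    have "(\<beta> + m) * (x - x0) \<le> (\<beta> + m) * (w - x0)"
      using that \<open>0 \<le> \<beta>\<close> \<open>0 \<le> m\<close> by (intro mult_left_mono) auto
    also have "\<dots> = m * (b - x0)"
      using \<open>(\<beta> + m) * \<theta> = m\<close> by (simp add: w_def)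
    finally have "H x \<le> 0"
      using that w_between assms(8)
      by (intro convex_on_nonpos_before_chord_zero[OF assms(2), of x \<beta>]) (auto simp: \<beta>_def m_def)
    then show ?thesis
      using that w_between assms(5,7) by (auto simp: F_def intro!: mult_nonpos_nonneg)
  qed
  moreover have "F x \<le> \<beta> * (\<beta> + m) * P" if "x \<in> {w..b}" for x
    using that w_between assms(5-8) convex_on_min_left_integrand_le[OF assms(2), of x "p x" P]
    by (simp add: F_def \<beta>_def m_def)
  ultimately have "integral {x0..b} F \<le> \<beta> * (\<beta> + m) * P * (b - w)"
    by (rule integral_le_step_bound[OF w_between])
  also have "\<dots> = P * \<beta> * ((\<beta> + m) * (b - w))"
    by (simp only: mult_ac)
  also have "(\<beta> + m) * (b - w) = ((\<beta> + m) - (\<beta> + m) * \<theta>) * (b - x0)"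
    by (simp add: w_def algebra_simps)
  also have "\<dots> = \<beta> * (b - x0)"
    using \<open>(\<beta> + m) * \<theta> = m\<close> by simp
  also have "P * \<beta> * (\<beta> * (b - x0)) = P * \<beta>\<^sup>2 * (b - x0)"
    by (simp add: power2_eq_square)
  finally show ?thesis
    by (simp add: F_def \<beta>_def)
qed

lemma convex_on_min_right_integral_le:
  fixes H p :: "real \<Rightarrow> real"
  assumes "a \<le> x0" and "convex_on {a..x0} H" and "continuous_on {a..x0} H"
    and "continuous_on {a..x0} p"
    and "\<And>x. x \<in> {a..x0} \<Longrightarrow> 0 \<le> p x" and "\<And>x. x \<in> {a..x0} \<Longrightarrow> p x \<le> P"
    and "\<And>x. x \<in> {a..x0} \<Longrightarrow> H x0 \<le> H x" and "H x0 \<le> 0"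
  shows "integral {a..x0} (\<lambda>x. H x * (H x - H x0) * p x) \<le> P * (max (H a) 0)\<^sup>2 * (x0 - a)"
proof -
  have reflect: "- x \<in> {a..x0} \<longleftrightarrow> x \<in> {-x0..-a}" for x
    by auto
  have "continuous_on {-x0..-a} (\<lambda>x. H (- x))" "continuous_on {-x0..-a} (\<lambda>x. p (- x))"
    using assms(3,4) by (auto intro!: continuous_on_compose2[where f=uminus] continuous_intros)
  then have "integral {-x0..-a} (\<lambda>x. H (- x) * (H (- x) - H (- (- x0))) * p (- x))
      \<le> P * (max (H (- (- a))) 0)\<^sup>2 * (- a - - x0)"
    using assms(1,5-8) reflect
    by (intro convex_on_min_left_integral_le convex_on_reflect[OF assms(2)]) auto
  then show ?thesis
    using Henstock_Kurzweil_Integration.integral_reflect_real[of x0 a "\<lambda>x. H x * (H x - H x0) * p x"] by simp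
qed

lemma convex_on_orthogonal_weighted_square_integral_le:
  fixes H p :: "real \<Rightarrow> real"
  assumes "a \<le> b" and "convex_on {a..b} H" and "continuous_on {a..b} H"
    and "continuous_on {a..b} p"
    and "\<And>x. x \<in> {a..b} \<Longrightarrow> 0 \<le> p x" and "\<And>x. x \<in> {a..b} \<Longrightarrow> p x \<le> P"
    and "integral {a..b} p > 0" and "integral {a..b} (\<lambda>x. H x * p x) = 0"
  shows "integral {a..b} (\<lambda>x. (H x)\<^sup>2 * p x) \<le> P * (max (max (H a) (H b)) 0)\<^sup>2 * (b - a)"
proof -
  define M where "M = max (max (H a) (H b)) 0"
  obtain x0 where x0: "x0 \<in> {a..b}" and x0_min: "\<And>x. x \<in> {a..b} \<Longrightarrow> H x0 \<le> H x"
    using continuous_attains_inf[OF compact_Icc _ assms(3)] assms(1) by auto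
  have Hp_int: "(\<lambda>x. H x * p x) integrable_on {a..b}"
    using assms(3,4) by (intro integrable_continuous_interval continuous_intros)
  have "H x0 \<le> 0"
    using assms(4) by (intro weighted_integral_zero_imp_min_nonpos[OF Hp_int _ assms(5,7,8) x0_min]
        integrable_continuous_interval)
  define F where "F x = H x * (H x - H x0) * p x" for x
  have F_int: "F integrable_on {a..b}"
    unfolding F_def using assms(3,4) by (intro integrable_continuous_interval continuous_intros)
  have "integral {a..b} F = integral {a..b} (\<lambda>x. (H x)\<^sup>2 * p x - H x0 * (H x * p x))"
    by (intro integral_cong) (simp add: F_def power2_eq_square algebra_simps)
  also have "\<dots> = integral {a..b} (\<lambda>x. (H x)\<^sup>2 * p x)"
    using assms(3,4,8) Hp_int
    by (subst Henstock_Kurzweil_Integration.integral_diff)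
       (auto intro!: integrable_continuous_interval continuous_intros)
  finally have "integral {a..b} (\<lambda>x. (H x)\<^sup>2 * p x) = integral {a..x0} F + integral {x0..b} F"
    using Henstock_Kurzweil_Integration.integral_combine[of a x0 b F] x0 F_int by simp
  also have "\<dots> \<le> P * (max (H a) 0)\<^sup>2 * (x0 - a) + P * (max (H b) 0)\<^sup>2 * (b - x0)"
  proof (rule add_mono)
    show "integral {a..x0} F \<le> P * (max (H a) 0)\<^sup>2 * (x0 - a)"
      unfolding F_def using x0 x0_min \<open>H x0 \<le> 0\<close> assms(2-6)
      by (intro convex_on_min_right_integral_le convex_on_subset[OF assms(2)]
          continuous_on_subset[OF assms(3)] continuous_on_subset[OF assms(4)]) auto
    show "integral {x0..b} F \<le> P * (max (H b) 0)\<^sup>2 * (b - x0)"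
      unfolding F_def using x0 x0_min \<open>H x0 \<le> 0\<close> assms(2-6)
      by (intro convex_on_min_left_integral_le convex_on_subset[OF assms(2)]
          continuous_on_subset[OF assms(3)] continuous_on_subset[OF assms(4)]) auto
  qed
  also have "\<dots> \<le> P * M\<^sup>2 * (x0 - a) + P * M\<^sup>2 * (b - x0)"
    using x0 assms(5,6)[of a] assms(1) unfolding M_def
    by (intro add_mono mult_right_mono mult_left_mono power_mono) auto
  also have "\<dots> = P * M\<^sup>2 * (b - a)"
    by (simp add: algebra_simps)
  finally show ?thesis
    unfolding M_def .
qed

lemma strictly_convex_on_orthogonal_endpoint_pos:
  fixes h p :: "real \<Rightarrow> real"
  assumes "a < b" and "strictly_convex_on {a..b} h" and "continuous_on {a..b} h"
    and "continuous_on {a..b} p" and "\<And>x. x \<in> {a..b} \<Longrightarrow> 0 \<le> p x"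
    and "integral {a..b} p > 0" and "integral {a..b} (\<lambda>x. h x * p x) = 0"
  shows "0 < h a \<or> 0 < h b"
proof (rule ccontr)
  assume "\<not> (0 < h a \<or> 0 < h b)"
  then have "h a \<le> 0" "h b \<le> 0"
    by auto
  have h_neg: "h x < 0" if "x \<in> {a<..<b}" for x
  proof -
    have "(b - x) * h a + (x - a) * h b \<le> 0"
      using that \<open>h a \<le> 0\<close> \<open>h b \<le> 0\<close> by (simp add: add_nonpos_nonpos mult_nonneg_nonpos)
    then have "((b - x) * h a + (x - a) * h b) / (b - a) \<le> 0"
      using assms(1) by (simp add: divide_nonpos_pos)
    then show ?thesis
      using strictly_convex_on_chord_less[OF assms(2), of a b x] that assms(1) by simp
  qed
  have hp_nonpos: "0 \<le> - (h x * p x)" if "x \<in> {a..b}" for x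
  proof -
    have "h x \<le> 0"
      using that h_neg[of x] \<open>h a \<le> 0\<close> \<open>h b \<le> 0\<close> by (cases "x = a \<or> x = b") auto
    then show ?thesis
      using assms(5)[OF that] by (simp add: mult_nonpos_nonneg)
  qed
  moreover have "continuous_on {a..b} (\<lambda>x. - (h x * p x))"
    using assms(3,4) by (intro continuous_intros)
  moreover have "integral {a..b} (\<lambda>x. - (h x * p x)) = 0"
    using assms(7) by simp
  ultimately have hp_zero: "h x * p x = 0" if "x \<in> {a..b}" for x
    using integral_eq_0_iff[OF _ assms(1)] that by force
  have "p x = 0" if "x \<in> {a<..<b}" for x
    using hp_zero[of x] h_neg[OF that] that by simp
  then have "integral {a..b} p = integral {a..b} (\<lambda>x. 0)"
    by (intro integral_spike[of "{a, b}"]) auto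
  then show False
    using assms(6) by simp
qed

theorem lemma3p6:
  fixes a b :: real and f f' p g :: "real \<Rightarrow> real"
  assumes ab: "a < b"
    and f_deriv: "\<And>x. x \<in> {a..b} \<Longrightarrow> (f has_real_derivative f' x) (at x within {a..b})"
    and f'_cont: "continuous_on {a..b} f'"
    and p_cont: "continuous_on {a..b} p"
    and f'_pos: "\<And>x. x \<in> {a..b} \<Longrightarrow> f' x > 0"
    and p_nonneg: "\<And>x. x \<in> {a..b} \<Longrightarrow> 0 \<le> p x"
    and p_int_pos: "integral {a..b} (\<lambda>y. \<bar>p y\<bar>) > 0"
    and f_sconv: "strictly_convex_on {a..b} f"
    and g_affine: "\<exists>c d. \<forall>x\<in>{a..b}. g x = c * x + d"
    and orth: "integral {a..b} (\<lambda>x. (f x - g x) * p x) = 0"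
  shows "integral {a..b} (\<lambda>x. (f x - g x)^2 * p x)
           \<le> (let lam = Max {\<bar>f x - g x\<bar> | x. x \<in> {a, b} \<and> g x < f x}
              in lam * (lam + (SUP x\<in>{a..b}. f' x)) * (SUP x\<in>{a..b}. p x) * (b - a))"
proof -
  obtain c d where g: "\<And>x. x \<in> {a..b} \<Longrightarrow> g x = c * x + d"
    using g_affine by blast
  define h where "h x = f x - g x" for x
  define lam where "lam = max (h a) (h b)"
  define P where "P = (SUP x\<in>{a..b}. p x)"
  define S where "S = (SUP x\<in>{a..b}. f' x)"
  have h_sconv: "strictly_convex_on {a..b} h"
    unfolding h_def using convex_real_interval(5) f_sconv g by (rule strictly_convex_on_diff_affine)
  have "continuous_on {a..b} (\<lambda>x. f x - (c * x + d))"
    using DERIV_continuous_on[OF f_deriv] by (intro continuous_intros)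
  then have h_cont: "continuous_on {a..b} h"
    by (rule continuous_on_eq) (simp add: h_def g)
  have p_int: "integral {a..b} p > 0"
    using p_int_pos p_nonneg integral_cong[of "{a..b}" "\<lambda>y. \<bar>p y\<bar>" p] by simp
  have "0 < h a \<or> 0 < h b"
    using ab h_sconv h_cont p_cont p_nonneg p_int orth unfolding h_def
    by (rule strictly_convex_on_orthogonal_endpoint_pos)
  then have lam_pos: "0 < lam" and lam_Max: "Max {\<bar>f x - g x\<bar> | x. x \<in> {a, b} \<and> g x < f x} = lam"
    using Max_pos_endpoint_values[of h a b] by (auto simp: lam_def h_def)
  have "0 \<le> P" "0 \<le> S"
    using ab p_nonneg[of a] continuous_on_Icc_le_SUP[OF p_cont, of a]
      f'_pos[of a] continuous_on_Icc_le_SUP[OF f'_cont, of a] by (auto simp: P_def S_def)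
  have "integral {a..b} (\<lambda>x. (h x)\<^sup>2 * p x) \<le> lam\<^sup>2 * (P * (b - a))"
    using convex_on_orthogonal_weighted_square_integral_le[of a b h p P] ab lam_pos
      strictly_convex_on_imp_convex_on[OF convex_real_interval(5) h_sconv] h_cont p_cont p_nonneg
      continuous_on_Icc_le_SUP[OF p_cont] p_int orth
    by (simp add: lam_def P_def h_def mult_ac)
  also have "\<dots> \<le> lam * (lam + S) * (P * (b - a))"
    using lam_pos ab \<open>0 \<le> P\<close> \<open>0 \<le> S\<close> by (intro mult_right_mono) (auto simp: power2_eq_square)
  finally show ?thesis
    unfolding Let_def lam_Max h_def P_def S_def by (simp only: mult_ac)
qed

end
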